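(* Let $\mathbf{W}=\langle W;\to,\neg,{}^{+},{}^{-},1\rangle$ be a quasi-Wajsberg* algebra, $0:=1\to 1$ and $x\wedge y:=\neg(\neg x\vee\neg y)$. Then for any $x,y,z\in W$: (1) $x\vee x=0\to x$ and $x\wedge x=0\to x$; (2) $x\to(y\wedge z)=(x\to y)\wedge(x\to z)$, $(x\wedge y)\to z=(x\to z)\vee(y\to z)$ and $(x\vee y)\to z=(x\to z)\wedge(y\to z)$; (3) $x\to y=(0\to x)\to y=x\to(0\to y)=(0\to x)\to(0\to y)$; (4) $x\vee y=0\to(x\vee y)=(0\to x)\vee y=x\vee(0\to y)=(0\to x)\vee(0\to y)$ and $x\wedge y=0\to(x\wedge y)=(0\to x)\wedge y=x\wedge(0\to y)=(0\to x)\wedge(0\to y)$.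
   Context: A quasi-Wajsberg* algebra is an algebra $\langle W;\to,\neg,{}^{+},{}^{-},1\rangle$ of type $\langle2,1,1,1,0\rangle$ such that for all $x,y,z\in W$: (QW*1) $x\to y=\neg y\to\neg x$; (QW*2) $(x\to 1)\to((y\to 1)\to z)=(y\to 1)\to((x\to 1)\to z)$; (QW*3) $(1\to x)\to 1=1$; (QW*4) $(z\to z)\to(x\to y)=x\to y$; (QW*5) $(1\to 1)\to x^{+}=((1\to 1)\to x)^{+}=(x\to 1)\to 1$ and $(1\to 1)\to x^{-}=((1\to 1)\to x)^{-}=(x\to\neg 1)\to\neg 1$; (QW*6) $x\to y=(y^{+}\to x^{-})\to(x^{+}\to y^{-})$; (QW*7) $\neg(x\to y)=y\to x$; (QW*8) $\neg\neg x=x$; (QW*9) $(x\to(\neg x\to y))^{+}=x^{+}\to(\neg x^{+}\to y^{+})$; (QW*10) $x\vee y=y\vee x$; (QW*11) $x\vee(y\vee z)=(x\vee y)\vee z$; (QW*12) $x\to(y\vee z)=(x\to y)\vee(x\to z)$; where $x\vee y:=((x^{+}\to y^{+})^{+}\to(\neg x)^{-})\to((y^{-}\to x^{-})^{-}\to x^{-})$. Conventions: ${}^+,{}^-$ bind tighter than $\neg$, which binds tighter than $\to$, and $\to$ binds tighter than $\vee,\wedge$. *)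

theory Defs
  imports Main
begin

text \<open>Quasi-Wajsberg* algebras <W; imp, neg, pl, mi, one>, carrier = the whole type 'a.
  imp = \<open>\<rightarrow>\<close>, neg = \<open>\<not>\<close>, pl = \<open>+\<close> (postfix), mi = \<open>-\<close> (postfix).\<close>

definition qw_join :: "('a \<Rightarrow> 'a \<Rightarrow> 'a) \<Rightarrow> ('a \<Rightarrow> 'a) \<Rightarrow> ('a \<Rightarrow> 'a) \<Rightarrow> ('a \<Rightarrow> 'a) \<Rightarrow> 'a \<Rightarrow> 'a \<Rightarrow> 'a"
  where "qw_join imp neg pl mi x y =
    imp (imp (pl (imp (pl x) (pl y))) (mi (neg x)))
        (imp (mi (imp (mi y) (mi x))) (mi x))"

definition qw_meet :: "('a \<Rightarrow> 'a \<Rightarrow> 'a) \<Rightarrow> ('a \<Rightarrow> 'a) \<Rightarrow> ('a \<Rightarrow> 'a) \<Rightarrow> ('a \<Rightarrow> 'a) \<Rightarrow> 'a \<Rightarrow> 'a \<Rightarrow> 'a"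
  where "qw_meet imp neg pl mi x y = neg (qw_join imp neg pl mi (neg x) (neg y))"

definition qw_zero :: "('a \<Rightarrow> 'a \<Rightarrow> 'a) \<Rightarrow> 'a \<Rightarrow> 'a"
  where "qw_zero imp one = imp one one"

definition quasi_wajsberg_star ::
  "('a \<Rightarrow> 'a \<Rightarrow> 'a) \<Rightarrow> ('a \<Rightarrow> 'a) \<Rightarrow> ('a \<Rightarrow> 'a) \<Rightarrow> ('a \<Rightarrow> 'a) \<Rightarrow> 'a \<Rightarrow> bool"
  where "quasi_wajsberg_star imp neg pl mi one \<longleftrightarrow>
    (\<forall>x y. imp x y = imp (neg y) (neg x)) \<and>
    (\<forall>x y z. imp (imp x one) (imp (imp y one) z) = imp (imp y one) (imp (imp x one) z)) \<and>
    (\<forall>x. imp (imp one x) one = one) \<and>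
    (\<forall>x y z. imp (imp z z) (imp x y) = imp x y) \<and>
    (\<forall>x. imp (imp one one) (pl x) = pl (imp (imp one one) x) \<and>
         pl (imp (imp one one) x) = imp (imp x one) one) \<and>
    (\<forall>x. imp (imp one one) (mi x) = mi (imp (imp one one) x) \<and>
         mi (imp (imp one one) x) = imp (imp x (neg one)) (neg one)) \<and>
    (\<forall>x y. imp x y = imp (imp (pl y) (mi x)) (imp (pl x) (mi y))) \<and>
    (\<forall>x y. neg (imp x y) = imp y x) \<and>
    (\<forall>x. neg (neg x) = x) \<and>
    (\<forall>x y. pl (imp x (imp (neg x) y)) = imp (pl x) (imp (neg (pl x)) (pl y))) \<and>
    (\<forall>x y. qw_join imp neg pl mi x y = qw_join imp neg pl mi y x) \<and>
    (\<forall>x y z. qw_join imp neg pl mi x (qw_join imp neg pl mi y z) =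
             qw_join imp neg pl mi (qw_join imp neg pl mi x y) z) \<and>
    (\<forall>x y z. imp x (qw_join imp neg pl mi y z) =
             qw_join imp neg pl mi (imp x y) (imp x z))"

end

theory Submission
  imports Defs
begin

(* Write 0 = 1 \<rightarrow> 1.  Every z \<rightarrow> z equals 0 and 0 is fixed by both
   superscript operations, so the idempotent join collapses to
   (0 \<rightarrow> (\<not>x)\<^sup>-) \<rightarrow> (0 \<rightarrow> x\<^sup>-), while (QW*6) expands 0 \<rightarrow> x into
   (x\<^sup>+ \<rightarrow> 0) \<rightarrow> (0 \<rightarrow> x\<^sup>-); by (QW*5) both first components equal
   1 \<rightarrow> (x \<rightarrow> 1).  Hence x \<or> x = 0 \<rightarrow> x, and (QW*12) gives
   x \<rightarrow> (0 \<rightarrow> y) = x \<rightarrow> (y \<or> y) = 0 \<rightarrow> (x \<rightarrow> y) = x \<rightarrow> y: a prefix 0 \<rightarrow> _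
   can be dropped under any implication, hence inside joins and meets, which
   are built from implications.  The laws for \<and> are those for \<or> transported
   along the involution \<not>. *)

locale quasi_wajsberg_star_algebra =
  fixes imp :: "'a \<Rightarrow> 'a \<Rightarrow> 'a" (infixr "\<rightarrow>" 70)
    and neg :: "'a \<Rightarrow> 'a" ("\<sim>_" [80] 80)
    and pl mi :: "'a \<Rightarrow> 'a"
    and one :: 'a
  assumes quasi_wajsberg_star: "quasi_wajsberg_star imp neg pl mi one"
begin

abbreviation join :: "'a \<Rightarrow> 'a \<Rightarrow> 'a" (infixl "\<squnion>" 65)
  where "x \<squnion> y \<equiv> qw_join imp neg pl mi x y"

abbreviation meet :: "'a \<Rightarrow> 'a \<Rightarrow> 'a" (infixl "\<sqinter>" 65)
  where "x \<sqinter> y \<equiv> qw_meet imp neg pl mi x y"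

abbreviation zero :: 'a ("\<zero>")
  where "\<zero> \<equiv> qw_zero imp one"

lemma imp_contrapos: "x \<rightarrow> y = \<sim>y \<rightarrow> \<sim>x"
  using quasi_wajsberg_star unfolding quasi_wajsberg_star_def by metis

lemma one_imp_imp_one: "(one \<rightarrow> x) \<rightarrow> one = one"
  using quasi_wajsberg_star unfolding quasi_wajsberg_star_def by metis

lemma imp_self_imp: "(z \<rightarrow> z) \<rightarrow> (x \<rightarrow> y) = x \<rightarrow> y"
  using quasi_wajsberg_star unfolding quasi_wajsberg_star_def by metis

lemma pl_zero_imp: "pl (\<zero> \<rightarrow> x) = \<zero> \<rightarrow> pl x"
  using quasi_wajsberg_star unfolding quasi_wajsberg_star_def qw_zero_def by metis

lemma zero_imp_pl: "\<zero> \<rightarrow> pl x = (x \<rightarrow> one) \<rightarrow> one"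
  using quasi_wajsberg_star unfolding quasi_wajsberg_star_def qw_zero_def by metis

lemma mi_zero_imp: "mi (\<zero> \<rightarrow> x) = \<zero> \<rightarrow> mi x"
  using quasi_wajsberg_star unfolding quasi_wajsberg_star_def qw_zero_def by metis

lemma zero_imp_mi: "\<zero> \<rightarrow> mi x = (x \<rightarrow> \<sim>one) \<rightarrow> \<sim>one"
  using quasi_wajsberg_star unfolding quasi_wajsberg_star_def qw_zero_def by metis

lemma imp_pl_mi: "x \<rightarrow> y = (pl y \<rightarrow> mi x) \<rightarrow> (pl x \<rightarrow> mi y)"
  using quasi_wajsberg_star unfolding quasi_wajsberg_star_def by metis

lemma neg_imp: "\<sim>(x \<rightarrow> y) = y \<rightarrow> x"
  using quasi_wajsberg_star unfolding quasi_wajsberg_star_def by metis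

lemma neg_neg: "\<sim>\<sim>x = x"
  using quasi_wajsberg_star unfolding quasi_wajsberg_star_def by metis

lemma join_commute: "x \<squnion> y = y \<squnion> x"
  using quasi_wajsberg_star unfolding quasi_wajsberg_star_def by metis

lemma imp_join_distrib: "x \<rightarrow> (y \<squnion> z) = (x \<rightarrow> y) \<squnion> (x \<rightarrow> z)"
  using quasi_wajsberg_star unfolding quasi_wajsberg_star_def by metis

lemma zero_eq: "\<zero> = one \<rightarrow> one"
  unfolding qw_zero_def ..

lemma zero_imp_imp: "\<zero> \<rightarrow> (x \<rightarrow> y) = x \<rightarrow> y"
  unfolding zero_eq by (rule imp_self_imp)

lemma imp_self: "x \<rightarrow> x = \<zero>"
proof -
  have "x \<rightarrow> x = \<sim>((one \<rightarrow> one) \<rightarrow> (x \<rightarrow> x))"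
    by (simp only: imp_self_imp neg_imp)
  also have "\<dots> = (x \<rightarrow> x) \<rightarrow> (one \<rightarrow> one)"
    by (rule neg_imp)
  also have "\<dots> = \<zero>"
    by (simp only: imp_self_imp zero_eq)
  finally show ?thesis .
qed

lemma neg_zero: "\<sim>\<zero> = \<zero>"
  unfolding zero_eq by (rule neg_imp)

lemma neg_zero_imp: "\<sim>(\<zero> \<rightarrow> x) = \<zero> \<rightarrow> \<sim>x"
  unfolding neg_imp imp_contrapos[of x \<zero>] neg_zero ..

lemma zero_imp_one: "\<zero> \<rightarrow> one = one"
  unfolding zero_eq by (rule one_imp_imp_one)

lemma neg_one: "\<sim>one = one \<rightarrow> \<zero>"
  using neg_imp[of \<zero> one] unfolding zero_imp_one .

lemma zero_imp_zero: "\<zero> \<rightarrow> \<zero> = \<zero>"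
  unfolding zero_eq by (rule imp_self_imp)

lemma pl_zero: "pl \<zero> = \<zero>"
proof -
  have "pl \<zero> = (\<zero> \<rightarrow> one) \<rightarrow> one"
    using pl_zero_imp[of \<zero>] unfolding zero_imp_zero zero_imp_pl .
  also have "\<dots> = \<zero>"
    unfolding zero_imp_one by (rule zero_eq[symmetric])
  finally show ?thesis .
qed

lemma mi_zero: "mi \<zero> = \<zero>"
proof -
  have "mi \<zero> = (\<zero> \<rightarrow> \<sim>one) \<rightarrow> \<sim>one"
    using mi_zero_imp[of \<zero>] unfolding zero_imp_zero zero_imp_mi .
  also have "\<dots> = \<zero>"
    unfolding neg_one by (simp only: zero_imp_imp imp_self)
  finally show ?thesis .
qed

lemma join_self: "x \<squnion> x = \<zero> \<rightarrow> x"
proof -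
  have "x \<squnion> x = (\<zero> \<rightarrow> mi (\<sim>x)) \<rightarrow> (\<zero> \<rightarrow> mi x)"
    unfolding qw_join_def imp_self pl_zero mi_zero ..
  also have "\<zero> \<rightarrow> mi (\<sim>x) = pl x \<rightarrow> \<zero>"
  proof -
    have "\<zero> \<rightarrow> mi (\<sim>x) = (\<sim>x \<rightarrow> \<sim>one) \<rightarrow> \<sim>one"
      by (rule zero_imp_mi)
    also have "\<dots> = (one \<rightarrow> x) \<rightarrow> \<sim>one"
      by (simp only: imp_contrapos[of one x])
    also have "\<dots> = \<sim>\<sim>one \<rightarrow> \<sim>(one \<rightarrow> x)"
      by (rule imp_contrapos)
    also have "\<dots> = one \<rightarrow> (x \<rightarrow> one)"
      by (simp only: neg_neg neg_imp)
    also have "\<dots> = \<sim>(\<zero> \<rightarrow> pl x)"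
      by (simp only: zero_imp_pl neg_imp)
    also have "\<dots> = pl x \<rightarrow> \<zero>"
      by (rule neg_imp)
    finally show ?thesis .
  qed
  also have "(pl x \<rightarrow> \<zero>) \<rightarrow> (\<zero> \<rightarrow> mi x) = \<zero> \<rightarrow> x"
    using imp_pl_mi[of \<zero> x] unfolding pl_zero mi_zero by (rule sym)
  finally show ?thesis .
qed

lemma meet_self: "x \<sqinter> x = \<zero> \<rightarrow> x"
  unfolding qw_meet_def join_self neg_zero_imp neg_neg ..

lemma imp_meet_distrib: "x \<rightarrow> (y \<sqinter> z) = (x \<rightarrow> y) \<sqinter> (x \<rightarrow> z)"
proof -
  have "x \<rightarrow> (y \<sqinter> z) = (\<sim>y \<squnion> \<sim>z) \<rightarrow> \<sim>x"
    unfolding qw_meet_def by (subst imp_contrapos) (simp only: neg_neg)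
  also have "\<dots> = \<sim>(\<sim>x \<rightarrow> (\<sim>y \<squnion> \<sim>z))"
    by (rule neg_imp[symmetric])
  also have "\<dots> = \<sim>((\<sim>x \<rightarrow> \<sim>y) \<squnion> (\<sim>x \<rightarrow> \<sim>z))"
    by (simp only: imp_join_distrib)
  also have "\<dots> = (x \<rightarrow> y) \<sqinter> (x \<rightarrow> z)"
    unfolding qw_meet_def neg_imp imp_contrapos[of y x] imp_contrapos[of z x] ..
  finally show ?thesis .
qed

lemma meet_imp: "(x \<sqinter> y) \<rightarrow> z = (x \<rightarrow> z) \<squnion> (y \<rightarrow> z)"
proof -
  have "(x \<sqinter> y) \<rightarrow> z = \<sim>z \<rightarrow> (\<sim>x \<squnion> \<sim>y)"
    unfolding qw_meet_def by (subst imp_contrapos) (simp only: neg_neg)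
  also have "\<dots> = (\<sim>z \<rightarrow> \<sim>x) \<squnion> (\<sim>z \<rightarrow> \<sim>y)"
    by (rule imp_join_distrib)
  also have "\<dots> = (x \<rightarrow> z) \<squnion> (y \<rightarrow> z)"
    by (simp only: imp_contrapos[of x z] imp_contrapos[of y z])
  finally show ?thesis .
qed

lemma join_imp: "(x \<squnion> y) \<rightarrow> z = (x \<rightarrow> z) \<sqinter> (y \<rightarrow> z)"
  unfolding qw_meet_def neg_imp imp_join_distrib[symmetric] ..

lemma imp_zero_imp: "x \<rightarrow> (\<zero> \<rightarrow> y) = x \<rightarrow> y"
proof -
  have "x \<rightarrow> (\<zero> \<rightarrow> y) = x \<rightarrow> (y \<squnion> y)"
    by (simp only: join_self)
  also have "\<dots> = (x \<rightarrow> y) \<squnion> (x \<rightarrow> y)"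
    by (rule imp_join_distrib)
  also have "\<dots> = x \<rightarrow> y"
    by (simp only: join_self zero_imp_imp)
  finally show ?thesis .
qed

lemma zero_imp_imp_left: "(\<zero> \<rightarrow> x) \<rightarrow> y = x \<rightarrow> y"
proof -
  have "(\<zero> \<rightarrow> x) \<rightarrow> y = \<sim>y \<rightarrow> (\<zero> \<rightarrow> \<sim>x)"
    by (subst imp_contrapos) (simp only: neg_zero_imp)
  also have "\<dots> = x \<rightarrow> y"
    by (simp only: imp_zero_imp imp_contrapos[of x y])
  finally show ?thesis .
qed

lemma zero_imp_join: "\<zero> \<rightarrow> (x \<squnion> y) = x \<squnion> y"
  unfolding qw_join_def by (rule zero_imp_imp)

lemma join_zero_imp_left: "(\<zero> \<rightarrow> x) \<squnion> y = x \<squnion> y"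
  unfolding qw_join_def pl_zero_imp mi_zero_imp neg_zero_imp
  by (simp only: zero_imp_imp_left imp_zero_imp)

lemma join_zero_imp_right: "x \<squnion> (\<zero> \<rightarrow> y) = x \<squnion> y"
  by (simp only: join_commute[of x] join_zero_imp_left)

lemma zero_imp_meet: "\<zero> \<rightarrow> (x \<sqinter> y) = x \<sqinter> y"
  unfolding qw_meet_def neg_zero_imp[symmetric] zero_imp_join ..

lemma meet_zero_imp_left: "(\<zero> \<rightarrow> x) \<sqinter> y = x \<sqinter> y"
  unfolding qw_meet_def neg_zero_imp join_zero_imp_left ..

lemma meet_commute: "x \<sqinter> y = y \<sqinter> x"
  unfolding qw_meet_def by (simp only: join_commute[of "\<sim>x"])

lemma meet_zero_imp_right: "x \<sqinter> (\<zero> \<rightarrow> y) = x \<sqinter> y"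
  by (simp only: meet_commute[of x] meet_zero_imp_left)

end

theorem proposition3p3:
  fixes imp :: "'a \<Rightarrow> 'a \<Rightarrow> 'a" and neg pl mi :: "'a \<Rightarrow> 'a" and one :: 'a
  assumes W: "quasi_wajsberg_star imp neg pl mi one"
  defines "J \<equiv> qw_join imp neg pl mi" and "M \<equiv> qw_meet imp neg pl mi"
    and "Z \<equiv> qw_zero imp one"
  shows "\<forall>x y z.
     (J x x = imp Z x \<and> M x x = imp Z x) \<and>
     (imp x (M y z) = M (imp x y) (imp x z) \<and>
      imp (M x y) z = J (imp x z) (imp y z) \<and>
      imp (J x y) z = M (imp x z) (imp y z)) \<and>
     (imp x y = imp (imp Z x) y \<and> imp (imp Z x) y = imp x (imp Z y) \<and>
      imp x (imp Z y) = imp (imp Z x) (imp Z y)) \<and>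
     (J x y = imp Z (J x y) \<and> imp Z (J x y) = J (imp Z x) y \<and>
      J (imp Z x) y = J x (imp Z y) \<and> J x (imp Z y) = J (imp Z x) (imp Z y)) \<and>
     (M x y = imp Z (M x y) \<and> imp Z (M x y) = M (imp Z x) y \<and>
      M (imp Z x) y = M x (imp Z y) \<and> M x (imp Z y) = M (imp Z x) (imp Z y))"
proof -
  interpret quasi_wajsberg_star_algebra imp neg pl mi one
    by unfold_locales (fact W)
  show ?thesis
    unfolding J_def M_def Z_def
    by (simp add: join_self meet_self imp_meet_distrib meet_imp join_imp
        imp_zero_imp zero_imp_imp_left zero_imp_join join_zero_imp_left join_zero_imp_right
        zero_imp_meet meet_zero_imp_left meet_zero_imp_right)
qed

end
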